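(* Let Assumptions (A1) and (A3) below hold. Then there exists $\alpha_1\in\mathcal K_\infty$ such that for all $\varepsilon>0$, all $T\in\mathbb{N}$, all $\hat x\in\mathbb{X}$ and all $\hat u\in\mathbb{U}^T(\hat x)$ with $\|(x_{\hat u}(k,\hat x),\hat u(k))\|_{\Pi^\star}\le\varepsilon$ for all $k\in\{0,\dots,T-1\}$, $$\sum_{k=0}^{T-1}\ell(x_{\hat u}(k,\hat x),\hat u(k))\le(T+p^\star-1)\ell^\star+T\alpha_1(\varepsilon).$$
   Context: System $x(k+1)=f(x(k),u(k))$ with constraint sets $\mathbb{X}\subset\mathbb{R}^n$, $\mathbb{U}\subset\mathbb{R}^m$ and stage cost $\ell:\mathbb{X}\times\mathbb{U}\to\mathbb{R}$, which is assumed non-negative. For $u\in\mathbb{U}^T$, $x_u(0,x)=x$, $x_u(k+1,x)=f(x_u(k,x),u(k))$; $\mathbb{U}^T(x)$ is the set of $u\in\mathbb{U}^T$ with $x_u(k,x)\in\mathbb{X}$ for $k=0,\dots,T$. A feasible $p$-periodic orbit is $\Pi\in(\mathbb{X}\times\mathbb{U})^p$ with $\Pi_\mathbb{X}([k+1]_p)=f(\Pi(k))$ ($[k]_p$ = $k$ mod $p$); $\|(x,u)\|_\Pi:=\min_k\|(x,u)-\Pi(k)\|$; $\ell^\star:=\inf$ over all feasible periodic orbits of $\frac1p\sum_{k=0}^{p-1}\ell(\Pi(k))$; $\Pi^\star$ is a fixed feasible $p^\star$-periodic orbit attaining $\ell^\star$. (A1) $f,\ell$ continuous, $\mathbb{X},\mathbb{U}$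 compact. (A3) There are $\lambda:\mathbb{X}\to\mathbb{R}$, $\bar\lambda$ with $|\lambda|\le\bar\lambda$ on $\mathbb{X}$, and $\underline\alpha_{\tilde\ell}\in\mathcal K_\infty$ with $\ell(x,u)-\ell^\star+\lambda(x)-\lambda(f(x,u))\ge\underline\alpha_{\tilde\ell}(\|(x,u)\|_{\Pi^\star})$ for all $x\in\mathbb{X}$, $u\in\mathbb{U}^1(x)$. *)

theory Defs
  imports "HOL-Analysis.Analysis"
begin

definition Kinf :: "(real \<Rightarrow> real) \<Rightarrow> bool" where
  "Kinf \<alpha> \<longleftrightarrow> continuous_on {0..} \<alpha> \<and> \<alpha> 0 = 0 \<and> strict_mono_on {0..} \<alpha>
     \<and> filterlim \<alpha> at_top at_top"

primrec traj :: "('a \<Rightarrow> 'b \<Rightarrow> 'a) \<Rightarrow> (nat \<Rightarrow> 'b) \<Rightarrow> 'a \<Rightarrow> nat \<Rightarrow> 'a" where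
  "traj f u x 0 = x"
| "traj f u x (Suc k) = f (traj f u x k) (u k)"

text \<open>Admissible input sequences of length T from x, U^T(x); only u(0..T-1) matter.\<close>
definition admissible ::
  "('a \<Rightarrow> 'b \<Rightarrow> 'a) \<Rightarrow> 'a set \<Rightarrow> 'b set \<Rightarrow> nat \<Rightarrow> 'a \<Rightarrow> (nat \<Rightarrow> 'b) \<Rightarrow> bool" where
  "admissible f X U T x u \<longleftrightarrow> (\<forall>k<T. u k \<in> U) \<and> (\<forall>k\<le>T. traj f u x k \<in> X)"

text \<open>Feasible p-periodic orbit, given by its values Orb 0, ..., Orb (p-1).\<close>
definition feasible_orbit ::
  "('a \<Rightarrow> 'b \<Rightarrow> 'a) \<Rightarrow> 'a set \<Rightarrow> 'b set \<Rightarrow> nat \<Rightarrow> (nat \<Rightarrow> 'a \<times> 'b) \<Rightarrow> bool" where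
  "feasible_orbit f X U p Orb \<longleftrightarrow> p \<ge> 1 \<and> (\<forall>k<p. Orb k \<in> X \<times> U)
     \<and> (\<forall>k<p. fst (Orb (Suc k mod p)) = f (fst (Orb k)) (snd (Orb k)))"

definition orbit_avg :: "('a \<Rightarrow> 'b \<Rightarrow> real) \<Rightarrow> nat \<Rightarrow> (nat \<Rightarrow> 'a \<times> 'b) \<Rightarrow> real" where
  "orbit_avg ell p Orb = (\<Sum>k<p. ell (fst (Orb k)) (snd (Orb k))) / real p"

definition ell_star ::
  "('a \<Rightarrow> 'b \<Rightarrow> 'a) \<Rightarrow> 'a set \<Rightarrow> 'b set \<Rightarrow> ('a \<Rightarrow> 'b \<Rightarrow> real) \<Rightarrow> real" where
  "ell_star f X U ell = Inf {orbit_avg ell p Orb | p Orb. feasible_orbit f X U p Orb}"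

definition orbit_dist ::
  "nat \<Rightarrow> (nat \<Rightarrow> 'a::real_normed_vector \<times> 'b::real_normed_vector) \<Rightarrow> 'a \<times> 'b \<Rightarrow> real" where
  "orbit_dist p Orb z = Min ((\<lambda>k. norm (z - Orb k)) ` {..<p})"

end

theory Submission
  imports Defs
begin

(* On the optimal orbit the dissipation inequality holds with equality at every step: its slacks
   are nonnegative and sum to p ell* - p ell* = 0 over one period. Hence
   ell(Pi j) = ell* + lam(x_(j+1)) - lam(x_j), and telescoping over at most p - 1 steps with ell >= 0
   gives lam(x_i) - lam(x_j) <= (p - 1) ell*.
   A trajectory staying eps-close to the orbit, with eps below a threshold eps0 coming from uniform
   continuity of f and the separation of the finitely many orbit states, shadows the orbit: nearest
   orbit points at consecutive times are consecutive on the orbit. Comparing each stage cost with the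
   cost at its nearest orbit point (up to the modulus of continuity omega(eps) of ell) and telescoping
   lam yields T ell* + (p - 1) ell* + T omega(eps); for eps >= eps0 the crude bound T max ell suffices.
   Only the non-strict dissipation inequality is used. *)

lemma Kinf_nonneg: "Kinf \<alpha> \<Longrightarrow> 0 \<le> s \<Longrightarrow> 0 \<le> \<alpha> s"
  unfolding Kinf_def strict_mono_on_def by (metis atLeast_iff order.refl order_le_less)

lemma min_one_div_scale:
  fixes e e' s :: real
  assumes "0 < e" "e \<le> e'" "0 < s"
  shows "min 1 (e' / s) \<le> e' / e * min 1 (e / s)"
proof (cases "s \<le> e")
  case True
  then show ?thesis using assms by simp
next
  case False
  then show ?thesis using assms by (simp add: min_def field_simps)
qed

(* The envelope dominates b (take s = eps), is nondecreasing, and eps |-> envelope(eps) / eps is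
   nonincreasing; the last two facts make it locally Lipschitz on (0, infinity). *)
definition scaled_sup_envelope :: "(real \<Rightarrow> real) \<Rightarrow> real \<Rightarrow> real" where
  "scaled_sup_envelope b \<epsilon> = (SUP s\<in>{0<..}. b s * min 1 (\<epsilon> / s))"

context
  fixes b :: "real \<Rightarrow> real" and B :: real
  assumes b_bounds: "\<And>s. 0 < s \<Longrightarrow> 0 \<le> b s \<and> b s \<le> B"
begin

private lemma term_bounds:
  assumes "0 \<le> \<epsilon>" "0 < s"
  shows "0 \<le> b s * min 1 (\<epsilon> / s)" "b s * min 1 (\<epsilon> / s) \<le> B"
proof -
  have "b s * min 1 (\<epsilon> / s) \<le> b s"
    using b_bounds[OF assms(2)] assms by (intro mult_left_le) auto
  then show "b s * min 1 (\<epsilon> / s) \<le> B" using b_bounds[OF assms(2)] by linarith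
  show "0 \<le> b s * min 1 (\<epsilon> / s)" using b_bounds[OF assms(2)] assms by simp
qed

lemma scaled_sup_envelope_upper:
  assumes "0 \<le> \<epsilon>" "0 < s"
  shows "b s * min 1 (\<epsilon> / s) \<le> scaled_sup_envelope b \<epsilon>"
  unfolding scaled_sup_envelope_def
  by (rule cSUP_upper) (use assms term_bounds in \<open>auto intro!: bdd_aboveI2\<close>)

lemma scaled_sup_envelope_least:
  assumes "\<And>s. 0 < s \<Longrightarrow> b s * min 1 (\<epsilon> / s) \<le> c"
  shows "scaled_sup_envelope b \<epsilon> \<le> c"
  unfolding scaled_sup_envelope_def by (rule cSUP_least) (use assms in auto)

lemma scaled_sup_envelope_ge: "0 < s \<Longrightarrow> b s \<le> scaled_sup_envelope b s"
  using scaled_sup_envelope_upper[of s s] by simp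

lemma scaled_sup_envelope_bounds:
  assumes "0 \<le> \<epsilon>"
  shows "0 \<le> scaled_sup_envelope b \<epsilon>" "scaled_sup_envelope b \<epsilon> \<le> B"
  using scaled_sup_envelope_upper[OF assms, of 1] term_bounds[OF assms, of 1]
    scaled_sup_envelope_least[of \<epsilon> B] term_bounds[OF assms] by auto

lemma scaled_sup_envelope_zero: "scaled_sup_envelope b 0 = 0"
  using scaled_sup_envelope_least[of 0 0] scaled_sup_envelope_bounds[of 0] by simp

lemma scaled_sup_envelope_mono:
  assumes "0 \<le> \<epsilon>" "\<epsilon> \<le> \<epsilon>'"
  shows "scaled_sup_envelope b \<epsilon> \<le> scaled_sup_envelope b \<epsilon>'"
proof (rule scaled_sup_envelope_least)
  fix s :: real assume s: "0 < s"
  have "b s * min 1 (\<epsilon> / s) \<le> b s * min 1 (\<epsilon>' / s)"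
    using b_bounds[OF s] assms s by (intro mult_left_mono min.mono divide_right_mono) auto
  also have "\<dots> \<le> scaled_sup_envelope b \<epsilon>'"
    using assms s by (intro scaled_sup_envelope_upper) auto
  finally show "b s * min 1 (\<epsilon> / s) \<le> scaled_sup_envelope b \<epsilon>'" .
qed

lemma scaled_sup_envelope_scale:
  assumes "0 < \<epsilon>" "\<epsilon> \<le> \<epsilon>'"
  shows "scaled_sup_envelope b \<epsilon>' \<le> \<epsilon>' / \<epsilon> * scaled_sup_envelope b \<epsilon>"
proof (rule scaled_sup_envelope_least)
  fix s :: real assume s: "0 < s"
  have "b s * min 1 (\<epsilon>' / s) \<le> b s * (\<epsilon>' / \<epsilon> * min 1 (\<epsilon> / s))"
    using min_one_div_scale[OF assms s] b_bounds[OF s] by (intro mult_left_mono) auto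
  also have "\<dots> = \<epsilon>' / \<epsilon> * (b s * min 1 (\<epsilon> / s))" by simp
  also have "\<dots> \<le> \<epsilon>' / \<epsilon> * scaled_sup_envelope b \<epsilon>"
    using assms s by (intro mult_left_mono scaled_sup_envelope_upper) auto
  finally show "b s * min 1 (\<epsilon>' / s) \<le> \<epsilon>' / \<epsilon> * scaled_sup_envelope b \<epsilon>" .
qed

lemma scaled_sup_envelope_lipschitz:
  assumes "0 < x" "0 < x'"
  shows "\<bar>scaled_sup_envelope b x' - scaled_sup_envelope b x\<bar> \<le> B * \<bar>x' - x\<bar> / min x x'"
proof -
  have *: "\<bar>scaled_sup_envelope b y' - scaled_sup_envelope b y\<bar> \<le> B * (y' - y) / y"
    if "0 < y" "y \<le> y'" for y y'
  proof -
    have "scaled_sup_envelope b y' - scaled_sup_envelope b y \<le> (y' - y) / y * scaled_sup_envelope b y"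
      using scaled_sup_envelope_scale[OF that] that by (simp add: field_simps)
    also have "\<dots> \<le> (y' - y) / y * B"
      using scaled_sup_envelope_bounds[of y] that by (intro mult_left_mono) auto
    finally show ?thesis
      using scaled_sup_envelope_mono[of y y'] that by (simp add: mult.commute)
  qed
  show ?thesis
    using *[of x x'] *[of x' x] assms by (cases "x \<le> x'") (auto simp: abs_minus_commute)
qed

lemma scaled_sup_envelope_continuous_pos:
  assumes "0 < x"
  shows "continuous (at x within {0..}) (scaled_sup_envelope b)"
  unfolding continuous_within_eps_delta
proof (intro allI impI)
  fix e :: real assume "0 < e"
  define d where "d = min (x / 2) (e * x / (2 * B + 1))"
  have B: "0 \<le> B" using b_bounds[of 1] by auto
  have "dist (scaled_sup_envelope b x') (scaled_sup_envelope b x) < e" if "dist x' x < d" for x'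
  proof -
    have close: "\<bar>x' - x\<bar> < d" using that by (simp add: dist_real_def)
    then have "\<bar>x' - x\<bar> < x / 2" unfolding d_def by simp
    then have near: "x / 2 \<le> min x x'" using assms by linarith
    have "\<bar>scaled_sup_envelope b x' - scaled_sup_envelope b x\<bar> \<le> B * \<bar>x' - x\<bar> / min x x'"
      using near assms by (intro scaled_sup_envelope_lipschitz) auto
    also have "\<dots> \<le> B * \<bar>x' - x\<bar> / (x / 2)"
      using near assms B by (intro divide_left_mono) auto
    also have "\<dots> \<le> B * d / (x / 2)"
      using close B assms by (intro divide_right_mono mult_left_mono) auto
    also have "\<dots> \<le> B * (e * x / (2 * B + 1)) / (x / 2)"
      using B assms unfolding d_def by (intro divide_right_mono mult_left_mono) auto
    also have "\<dots> = 2 * B * e / (2 * B + 1)" using B assms by simp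
    also have "\<dots> < e" using B \<open>0 < e\<close> by (simp add: divide_less_eq)
    finally show ?thesis by (simp add: dist_real_def)
  qed
  moreover have "0 < d" using assms \<open>0 < e\<close> B unfolding d_def by simp
  ultimately show "\<exists>d>0. \<forall>x'\<in>{0..}. dist x' x < d \<longrightarrow>
      dist (scaled_sup_envelope b x') (scaled_sup_envelope b x) < e" by blast
qed

lemma scaled_sup_envelope_continuous_zero:
  assumes "(b \<longlongrightarrow> 0) (at_right 0)"
  shows "continuous (at 0 within {0..}) (scaled_sup_envelope b)"
  unfolding continuous_within_eps_delta
proof (intro allI impI)
  fix e :: real assume "0 < e"
  have B: "0 \<le> B" using b_bounds[of 1] by auto
  have "eventually (\<lambda>s. dist (b s) 0 < e / 2) (at_right 0)"
    using tendsto_iff[THEN iffD1, OF assms, rule_format, of "e / 2"] \<open>0 < e\<close> by simp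
  then obtain d0 where "0 < d0" and "\<forall>s>0. s < d0 \<longrightarrow> \<bar>b s\<bar> < e / 2"
    unfolding eventually_at_right_field dist_real_def by auto
  then have small: "\<And>s. 0 < s \<Longrightarrow> s < d0 \<Longrightarrow> b s \<le> e / 2" by fastforce
  define d where "d = e * d0 / (2 * (B + 1))"
  have small_env: "scaled_sup_envelope b x \<le> e / 2" if "0 \<le> x" "x < d" for x
  proof (rule scaled_sup_envelope_least)
    fix s :: real assume "0 < s"
    show "b s * min 1 (x / s) \<le> e / 2"
    proof (cases "s < d0")
      case True
      have "b s * min 1 (x / s) \<le> b s"
        using b_bounds[OF \<open>0 < s\<close>] that \<open>0 < s\<close> by (intro mult_left_le) auto
      then show ?thesis using small[OF \<open>0 < s\<close> True] by linarith
    next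
      case False
      have "b s * min 1 (x / s) \<le> B * (x / d0)"
        using b_bounds[OF \<open>0 < s\<close>] False that \<open>0 < d0\<close>
        by (intro mult_mono min.coboundedI2 divide_left_mono) auto
      also have "\<dots> \<le> B * (d / d0)"
        using that B \<open>0 < d0\<close> by (intro mult_left_mono divide_right_mono) auto
      also have "\<dots> \<le> e / 2"
        using B \<open>0 < e\<close> \<open>0 < d0\<close> unfolding d_def
        by (simp add: add.commute add_strict_increasing less_eq_real_def mult_imp_div_pos_less)
      finally show ?thesis .
    qed
  qed
  have "dist (scaled_sup_envelope b x) (scaled_sup_envelope b 0) < e"
    if "x \<in> {0..}" "dist x 0 < d" for x
  proof -
    have "0 \<le> x" "x < d" using that by (auto simp: dist_real_def)
    then show ?thesis
      using small_env[of x] scaled_sup_envelope_bounds(1)[of x] \<open>0 < e\<close>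
      by (simp add: dist_real_def scaled_sup_envelope_zero)
  qed
  moreover have "0 < d" using \<open>0 < e\<close> \<open>0 < d0\<close> B unfolding d_def by simp
  ultimately show "\<exists>d>0. \<forall>x\<in>{0..}. dist x 0 < d \<longrightarrow>
      dist (scaled_sup_envelope b x) (scaled_sup_envelope b 0) < e" by blast
qed

theorem Kinf_majorant:
  assumes "(b \<longlongrightarrow> 0) (at_right 0)"
  shows "\<exists>\<alpha>. Kinf \<alpha> \<and> (\<forall>s>0. b s \<le> \<alpha> s)"
proof (intro exI conjI)
  let ?\<alpha> = "\<lambda>\<epsilon>. scaled_sup_envelope b \<epsilon> + \<epsilon>"
  have "continuous_on {0..} (scaled_sup_envelope b)"
    unfolding continuous_on_eq_continuous_within
    using scaled_sup_envelope_continuous_pos scaled_sup_envelope_continuous_zero[OF assms]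
    by (metis atLeast_iff order_le_less)
  moreover have "strict_mono_on {0..} ?\<alpha>"
    using scaled_sup_envelope_mono by (intro strict_mono_onI) (simp add: add_le_less_mono)
  moreover have "filterlim ?\<alpha> at_top at_top"
    using scaled_sup_envelope_bounds
    by (intro filterlim_at_top_mono[OF filterlim_ident]) (auto simp: eventually_at_top_linorder)
  ultimately show "Kinf ?\<alpha>"
    unfolding Kinf_def by (auto intro!: continuous_intros simp: scaled_sup_envelope_zero)
  show "\<forall>s>0. b s \<le> ?\<alpha> s"
    using scaled_sup_envelope_ge by (simp add: add_increasing2)
qed

end

lemma finite_imp_uniform_discrete: "finite S \<Longrightarrow> uniform_discrete S"
  by (induction rule: finite_induct) (simp_all add: uniform_discrete_insert)

lemma uniformly_continuous_on_snap_to_finite: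
  fixes F :: "'a::metric_space \<Rightarrow> 'b::metric_space"
  assumes "uniformly_continuous_on K F" "finite S" "F ` P \<subseteq> S" "P \<subseteq> K"
  shows "\<exists>\<epsilon>0>0. \<forall>z\<in>K. \<forall>q\<in>P. \<forall>s\<in>S. dist z q < \<epsilon>0 \<longrightarrow> dist (F z) s < \<epsilon>0 \<longrightarrow> F q = s"
proof -
  obtain \<delta> where "0 < \<delta>" and sep: "\<forall>x\<in>S. \<forall>y\<in>S. dist x y < \<delta> \<longrightarrow> x = y"
    using finite_imp_uniform_discrete[OF assms(2)] unfolding uniform_discrete_def by blast
  obtain d where "0 < d" and d: "\<forall>z\<in>K. \<forall>q\<in>K. dist q z < d \<longrightarrow> dist (F q) (F z) < \<delta> / 2"
    using assms(1)[unfolded uniformly_continuous_on_def, rule_format, of "\<delta> / 2"] \<open>0 < \<delta>\<close> by auto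
  have "F q = s" if "z \<in> K" "q \<in> P" "s \<in> S" "dist z q < min d (\<delta> / 2)" "dist (F z) s < min d (\<delta> / 2)"
    for z q s
  proof -
    have "dist q z < d" using that by (simp add: dist_commute)
    then have "dist (F q) (F z) < \<delta> / 2" using d that assms(4) by blast
    moreover have "dist s (F z) < \<delta> / 2" using that by (simp add: dist_commute)
    ultimately have "dist (F q) s < \<delta>" by (rule dist_triangle_half_l)
    moreover have "F q \<in> S" using that assms(3) by blast
    ultimately show ?thesis using sep \<open>s \<in> S\<close> by blast
  qed
  moreover have "0 < min d (\<delta> / 2)" using \<open>0 < d\<close> \<open>0 < \<delta>\<close> by simp
  ultimately show ?thesis by blast
qed

definition modulus_of_continuity :: "'a::metric_space set \<Rightarrow> ('a \<Rightarrow> 'b::metric_space) \<Rightarrow> real \<Rightarrow> real" where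
  "modulus_of_continuity S g \<epsilon> = (SUP (z, w)\<in>{(z, w)\<in>S \<times> S. dist z w \<le> \<epsilon>}. dist (g z) (g w))"

lemma modulus_of_continuity_least:
  assumes "S \<noteq> {}" "0 \<le> \<epsilon>" "\<And>z w. z \<in> S \<Longrightarrow> w \<in> S \<Longrightarrow> dist z w \<le> \<epsilon> \<Longrightarrow> dist (g z) (g w) \<le> c"
  shows "modulus_of_continuity S g \<epsilon> \<le> c"
proof -
  obtain z where "z \<in> S" using assms(1) by blast
  then have "(z, z) \<in> {(z, w)\<in>S \<times> S. dist z w \<le> \<epsilon>}" using assms(2) by simp
  then have "{(z, w)\<in>S \<times> S. dist z w \<le> \<epsilon>} \<noteq> {}" by blast
  then show ?thesis
    unfolding modulus_of_continuity_def by (rule cSUP_least) (use assms(3) in auto)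
qed

lemma dist_le_modulus_of_continuity:
  assumes "bdd_above ((\<lambda>(z, w). dist (g z) (g w)) ` {(z, w)\<in>S \<times> S. dist z w \<le> \<epsilon>})"
    and "z \<in> S" "w \<in> S" "dist z w \<le> \<epsilon>"
  shows "dist (g z) (g w) \<le> modulus_of_continuity S g \<epsilon>"
  unfolding modulus_of_continuity_def using cSUP_upper[OF _ assms(1), of "(z, w)"] assms(2-) by simp

lemma dist_le_modulus_of_continuity_bounded:
  assumes "bounded (g ` S)" "z \<in> S" "w \<in> S" "dist z w \<le> \<epsilon>"
  shows "dist (g z) (g w) \<le> modulus_of_continuity S g \<epsilon>"
proof (rule dist_le_modulus_of_continuity[OF _ assms(2-)])
  obtain c where "\<forall>x\<in>g ` S. \<forall>y\<in>g ` S. dist x y \<le> c" using assms(1) bounded_two_points by blast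
  then show "bdd_above ((\<lambda>(z, w). dist (g z) (g w)) ` {(z, w)\<in>S \<times> S. dist z w \<le> \<epsilon>})"
    by (intro bdd_aboveI2[where M = c]) auto
qed

lemma tendsto_modulus_of_continuity:
  assumes "uniformly_continuous_on S g" "S \<noteq> {}"
  shows "(modulus_of_continuity S g \<longlongrightarrow> 0) (at_right 0)"
  unfolding tendsto_iff eventually_at_right_field
proof (intro allI impI)
  fix e :: real assume "0 < e"
  obtain d where "0 < d" and d: "\<forall>z\<in>S. \<forall>w\<in>S. dist w z < d \<longrightarrow> dist (g w) (g z) < e / 2"
    using assms(1)[unfolded uniformly_continuous_on_def, rule_format, of "e / 2"] \<open>0 < e\<close> by auto
  have "dist (modulus_of_continuity S g \<epsilon>) 0 < e" if "0 < \<epsilon>" "\<epsilon> < d" for \<epsilon>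
  proof -
    have small: "dist (g z) (g w) \<le> e / 2" if "z \<in> S" "w \<in> S" "dist z w \<le> \<epsilon>" for z w
    proof -
      have "dist z w < d" using that \<open>\<epsilon> < d\<close> by simp
      then show ?thesis using d that by (meson less_eq_real_def)
    qed
    have "bdd_above ((\<lambda>(z, w). dist (g z) (g w)) ` {(z, w)\<in>S \<times> S. dist z w \<le> \<epsilon>})"
      using small by (intro bdd_aboveI2[where M = "e / 2"]) auto
    moreover obtain z where "z \<in> S" using assms(2) by blast
    ultimately have "0 \<le> modulus_of_continuity S g \<epsilon>"
      using dist_le_modulus_of_continuity[of g S \<epsilon> z z] \<open>0 < \<epsilon>\<close> by simp
    moreover have "modulus_of_continuity S g \<epsilon> \<le> e / 2"
      using small assms(2) \<open>0 < \<epsilon>\<close> by (intro modulus_of_continuity_least) auto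
    ultimately show ?thesis using \<open>0 < e\<close> by (simp add: dist_real_def)
  qed
  then show "\<exists>d>0. \<forall>\<epsilon>>0. \<epsilon> < d \<longrightarrow> dist (modulus_of_continuity S g \<epsilon>) 0 < e"
    using \<open>0 < d\<close> by blast
qed

lemma sum_lessThan_Suc_mod: "(\<Sum>j<p. g (Suc j mod p)) = (\<Sum>j<p. g j)"
proof (cases p)
  case (Suc q)
  have "(\<Sum>j<Suc q. g (Suc j mod Suc q)) = (\<Sum>j<q. g (Suc j)) + g 0"
    by (simp cong: sum.cong_simp)
  also have "\<dots> = (\<Sum>j<Suc q. g j)" by (simp only: sum.lessThan_Suc_shift add.commute)
  finally show ?thesis using Suc by simp
qed simp

lemma cycle_dissipation_tight:
  fixes c v :: "nat \<Rightarrow> real"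
  assumes dissipation: "\<And>j. j < p \<Longrightarrow> v (Suc j mod p) - v j \<le> c j - a"
    and average: "(\<Sum>j<p. c j) = real p * a"
    and "j < p"
  shows "c j = a + v (Suc j mod p) - v j"
proof -
  let ?slack = "\<lambda>j. c j - a - (v (Suc j mod p) - v j)"
  have "(\<Sum>j<p. ?slack j) = (\<Sum>j<p. c j) - real p * a - ((\<Sum>j<p. v (Suc j mod p)) - (\<Sum>j<p. v j))"
    by (simp add: sum_subtractf)
  also have "\<dots> = 0" by (simp add: average sum_lessThan_Suc_mod)
  finally have "?slack j = 0"
    using sum_nonneg_eq_0_iff[of "{..<p}" ?slack] dissipation \<open>j < p\<close> by simp
  then show ?thesis by simp
qed

lemma cycle_telescope:
  fixes c v :: "nat \<Rightarrow> real"
  assumes tight: "\<And>j. j < p \<Longrightarrow> c j = a + v (Suc j mod p) - v j" and "j < p"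
  shows "(\<Sum>t<m. c ((j + t) mod p)) = real m * a + v ((j + m) mod p) - v j"
proof (induction m)
  case 0
  then show ?case using \<open>j < p\<close> by simp
next
  case (Suc m)
  have "c ((j + m) mod p) = a + v ((j + Suc m) mod p) - v ((j + m) mod p)"
    using tight[of "(j + m) mod p"] \<open>j < p\<close> by (simp add: mod_Suc_eq)
  then show ?case using Suc by (simp add: algebra_simps)
qed

lemma cycle_storage_diff_le:
  fixes c v :: "nat \<Rightarrow> real"
  assumes nonneg: "\<And>j. j < p \<Longrightarrow> 0 \<le> c j"
    and tight: "\<And>j. j < p \<Longrightarrow> c j = a + v (Suc j mod p) - v j"
    and "i < p" "j < p"
  shows "v i - v j \<le> (real p - 1) * a"
proof -
  define m where "m = (if j < i then i - j else p + i - j)"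
  have m: "1 \<le> m" "m \<le> p" "(j + m) mod p = i"
    using \<open>i < p\<close> \<open>j < p\<close> by (auto simp: m_def)
  have partial: "(\<Sum>t<m. c ((j + t) mod p)) \<le> (\<Sum>t<p. c ((j + t) mod p))"
    using m \<open>j < p\<close> by (intro sum_mono2) (auto intro!: nonneg)
  have full: "(\<Sum>t<p. c ((j + t) mod p)) = real p * a"
    using cycle_telescope[where c = c and v = v and m = p, OF tight \<open>j < p\<close>] \<open>j < p\<close> by simp
  have "0 \<le> a"
    using full \<open>j < p\<close> sum_nonneg[of "{..<p}" "\<lambda>t. c ((j + t) mod p)"] nonneg
    by (simp add: zero_le_mult_iff)
  have "v i - v j = (\<Sum>t<m. c ((j + t) mod p)) - real m * a"
    using cycle_telescope[where c = c and v = v and m = m, OF tight \<open>j < p\<close>] m by simp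
  also have "\<dots> \<le> (real p - real m) * a" using partial full by (simp add: algebra_simps)
  also have "\<dots> \<le> (real p - 1) * a" using m \<open>0 \<le> a\<close> by (intro mult_right_mono) auto
  finally show ?thesis .
qed

lemma sum_le_chain_telescope:
  fixes c g h :: "nat \<Rightarrow> real"
  assumes "\<And>k. k \<le> n \<Longrightarrow> c k \<le> a + g k - h k"
    and "\<And>k. k < n \<Longrightarrow> g k = h (Suc k)"
  shows "(\<Sum>k<Suc n. c k) \<le> real (Suc n) * a + g n - h 0"
  using assms
proof (induction n)
  case 0
  then show ?case by simp
next
  case (Suc n)
  have "(\<Sum>k<Suc n. c k) \<le> real (Suc n) * a + g n - h 0"
    by (rule Suc.IH) (simp_all add: Suc.prems(1) Suc.prems(2)[symmetric])
  moreover have "c (Suc n) \<le> a + g (Suc n) - h (Suc n)" using Suc.prems(1) by blast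
  moreover have "g n = h (Suc n)" using Suc.prems(2) by blast
  ultimately show ?case by (simp add: algebra_simps)
qed

lemma orbit_dist_attained:
  fixes Orb :: "nat \<Rightarrow> 'a::real_normed_vector \<times> 'b::real_normed_vector"
  assumes "1 \<le> p"
  shows "\<exists>j<p. orbit_dist p Orb z = norm (z - Orb j)"
proof -
  have "orbit_dist p Orb z \<in> (\<lambda>k. norm (z - Orb k)) ` {..<p}"
    unfolding orbit_dist_def using assms by (intro Min_in) (auto simp: lessThan_empty_iff)
  then show ?thesis by auto
qed

locale periodic_dissipative_system =
  fixes f :: "'a::real_normed_vector \<Rightarrow> 'b::real_normed_vector \<Rightarrow> 'a"
    and X :: "'a set" and U :: "'b set" and ell :: "'a \<Rightarrow> 'b \<Rightarrow> real"
    and p :: nat and Orb :: "nat \<Rightarrow> 'a \<times> 'b" and ls :: real and lam :: "'a \<Rightarrow> real"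
  assumes f_cont: "continuous_on (X \<times> U) (\<lambda>(x, u). f x u)"
    and ell_cont: "continuous_on (X \<times> U) (\<lambda>(x, u). ell x u)"
    and compact_X: "compact X" and compact_U: "compact U"
    and ell_nonneg: "\<And>x u. x \<in> X \<Longrightarrow> u \<in> U \<Longrightarrow> 0 \<le> ell x u"
    and orbit_feasible: "feasible_orbit f X U p Orb"
    and orbit_average: "orbit_avg ell p Orb = ls"
    and dissipative: "\<And>x u. x \<in> X \<Longrightarrow> u \<in> U \<Longrightarrow> f x u \<in> X \<Longrightarrow> lam (f x u) - lam x \<le> ell x u - ls"
begin

lemma period_pos: "1 \<le> p"
  using orbit_feasible by (simp add: feasible_orbit_def)

lemma orbit_mem: "j < p \<Longrightarrow> Orb j \<in> X \<times> U"
  using orbit_feasible by (simp add: feasible_orbit_def)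

lemma compact_domain: "compact (X \<times> U)"
  using compact_X compact_U by (rule compact_Times)

lemma domain_nonempty: "X \<times> U \<noteq> {}"
  using orbit_mem[of 0] period_pos by auto

lemma cost_uniformly_continuous: "uniformly_continuous_on (X \<times> U) (case_prod ell)"
  using compact_uniformly_continuous[OF _ compact_domain] ell_cont by simp

lemma cost_modulus:
  assumes "z \<in> X \<times> U" "w \<in> X \<times> U" "dist z w \<le> \<epsilon>"
  shows "\<bar>case_prod ell z - case_prod ell w\<bar> \<le> modulus_of_continuity (X \<times> U) (case_prod ell) \<epsilon>"
proof -
  have "bounded (case_prod ell ` (X \<times> U))"
    using compact_domain ell_cont by (simp add: compact_continuous_image compact_imp_bounded)
  from dist_le_modulus_of_continuity_bounded[OF this assms] show ?thesis by (simp add: dist_real_def)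
qed

lemma orbit_step: "j < p \<Longrightarrow> fst (Orb (Suc j mod p)) = case_prod f (Orb j)"
  using orbit_feasible by (simp add: feasible_orbit_def split_beta)

lemma orbit_cost_sum: "(\<Sum>j<p. case_prod ell (Orb j)) = real p * ls"
  using orbit_average period_pos by (simp add: orbit_avg_def split_beta field_simps)

lemma average_nonneg: "0 \<le> ls"
proof -
  have "0 \<le> (\<Sum>j<p. case_prod ell (Orb j))"
    using orbit_mem ell_nonneg by (intro sum_nonneg) (auto simp: split_beta mem_Times_iff)
  then show ?thesis using orbit_cost_sum period_pos by (simp add: zero_le_mult_iff)
qed

lemma orbit_cost_tight:
  assumes "j < p"
  shows "case_prod ell (Orb j) = ls + lam (fst (Orb (Suc j mod p))) - lam (fst (Orb j))"
proof (rule cycle_dissipation_tight[OF _ orbit_cost_sum assms])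
  fix i assume "i < p"
  then have "Orb i \<in> X \<times> U" "Orb (Suc i mod p) \<in> X \<times> U"
    using orbit_mem period_pos by auto
  then show "lam (fst (Orb (Suc i mod p))) - lam (fst (Orb i)) \<le> case_prod ell (Orb i) - ls"
    using dissipative orbit_step[OF \<open>i < p\<close>] by (auto simp: split_beta mem_Times_iff)
qed

lemma orbit_storage_diff_le:
  "i < p \<Longrightarrow> j < p \<Longrightarrow> lam (fst (Orb i)) - lam (fst (Orb j)) \<le> (real p - 1) * ls"
  using orbit_mem ell_nonneg
  by (intro cycle_storage_diff_le[where c = "\<lambda>j. case_prod ell (Orb j)"] orbit_cost_tight)
    (auto simp: split_beta mem_Times_iff)

lemma cost_nonneg: "z \<in> X \<times> U \<Longrightarrow> 0 \<le> case_prod ell z"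
  using ell_nonneg by (auto simp: mem_Times_iff split_beta)

lemma cost_bounded: obtains M where "0 \<le> M" "\<And>z. z \<in> X \<times> U \<Longrightarrow> case_prod ell z \<le> M"
proof -
  obtain z0 where "z0 \<in> X \<times> U" "\<forall>z\<in>X \<times> U. case_prod ell z \<le> case_prod ell z0"
    using continuous_attains_sup[OF compact_domain domain_nonempty ell_cont] by blast
  then show ?thesis
    using ell_nonneg by (intro that[of "case_prod ell z0"]) (auto simp: split_beta mem_Times_iff)
qed

lemma orbit_snap:
  obtains \<epsilon>0 where "0 < \<epsilon>0"
    and "\<And>z i j. z \<in> X \<times> U \<Longrightarrow> i < p \<Longrightarrow> j < p \<Longrightarrow> dist z (Orb i) < \<epsilon>0 \<Longrightarrow>
      dist (case_prod f z) (fst (Orb j)) < \<epsilon>0 \<Longrightarrow> fst (Orb (Suc i mod p)) = fst (Orb j)"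
proof -
  have "uniformly_continuous_on (X \<times> U) (case_prod f)"
    using compact_uniformly_continuous[OF _ compact_domain] f_cont by simp
  moreover have "case_prod f (Orb j) \<in> fst ` Orb ` {..<p}" if "j < p" for j
  proof -
    have "Orb (Suc j mod p) \<in> Orb ` {..<p}" using period_pos by simp
    then show ?thesis using orbit_step[OF that] by (metis image_eqI)
  qed
  then have "case_prod f ` Orb ` {..<p} \<subseteq> fst ` Orb ` {..<p}" by blast
  ultimately obtain \<epsilon>0 where "0 < \<epsilon>0" and snap: "\<forall>z\<in>X \<times> U. \<forall>q\<in>Orb ` {..<p}. \<forall>s\<in>fst ` Orb ` {..<p}.
      dist z q < \<epsilon>0 \<longrightarrow> dist (case_prod f z) s < \<epsilon>0 \<longrightarrow> case_prod f q = s"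
    using uniformly_continuous_on_snap_to_finite[of "X \<times> U" "case_prod f" "fst ` Orb ` {..<p}" "Orb ` {..<p}"]
      orbit_mem by blast
  show ?thesis
    by (rule that[OF \<open>0 < \<epsilon>0\<close>]) (use snap orbit_step in fastforce)
qed

lemma near_orbit_cost_le:
  obtains \<epsilon>0 where "0 < \<epsilon>0"
    and "\<And>\<epsilon> T xh uh. \<epsilon> < \<epsilon>0 \<Longrightarrow> admissible f X U T xh uh \<Longrightarrow>
      (\<forall>k<T. orbit_dist p Orb (traj f uh xh k, uh k) \<le> \<epsilon>) \<Longrightarrow>
      (\<Sum>k<T. ell (traj f uh xh k) (uh k))
        \<le> (real T + real p - 1) * ls + real T * modulus_of_continuity (X \<times> U) (case_prod ell) \<epsilon>"
proof -
  obtain \<epsilon>0 where "0 < \<epsilon>0" and snap: "\<And>z i j. z \<in> X \<times> U \<Longrightarrow> i < p \<Longrightarrow> j < p \<Longrightarrow>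
      dist z (Orb i) < \<epsilon>0 \<Longrightarrow> dist (case_prod f z) (fst (Orb j)) < \<epsilon>0 \<Longrightarrow>
      fst (Orb (Suc i mod p)) = fst (Orb j)"
    using orbit_snap by blast
  let ?\<omega> = "modulus_of_continuity (X \<times> U) (case_prod ell)"
  have "(\<Sum>k<T. ell (traj f uh xh k) (uh k)) \<le> (real T + real p - 1) * ls + real T * ?\<omega> \<epsilon>"
    if "\<epsilon> < \<epsilon>0" and adm: "admissible f X U T xh uh"
      and close: "\<forall>k<T. orbit_dist p Orb (traj f uh xh k, uh k) \<le> \<epsilon>" for \<epsilon> T xh uh
  proof (cases T)
    case 0
    then show ?thesis using period_pos average_nonneg by simp
  next
    case (Suc n)
    define z where "z k = (traj f uh xh k, uh k)" for k
    have z_mem: "z k \<in> X \<times> U" if "k < T" for k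
      using adm that by (simp add: admissible_def z_def)
    have "\<forall>k. \<exists>j<p. orbit_dist p Orb (z k) = dist (z k) (Orb j)"
      unfolding dist_norm using orbit_dist_attained[OF period_pos] by blast
    then obtain J where J: "\<And>k. J k < p" and J_dist: "\<And>k. orbit_dist p Orb (z k) = dist (z k) (Orb (J k))"
      by metis
    have near: "dist (z k) (Orb (J k)) \<le> \<epsilon>" if "k < T" for k
      using close that J_dist by (simp add: z_def)
    let ?g = "\<lambda>k. lam (fst (Orb (Suc (J k) mod p)))" and ?h = "\<lambda>k. lam (fst (Orb (J k)))"
    \<comment> \<open>Consecutive nearest orbit points are consecutive on the orbit, so the storage terms telescope.\<close>
    have "(\<Sum>k<Suc n. case_prod ell (z k)) \<le> real (Suc n) * (ls + ?\<omega> \<epsilon>) + ?g n - ?h 0"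
    proof (rule sum_le_chain_telescope)
      fix k assume "k \<le> n"
      then have "k < T" using Suc by simp
      then have "case_prod ell (z k) \<le> case_prod ell (Orb (J k)) + ?\<omega> \<epsilon>"
        using cost_modulus[OF z_mem orbit_mem[OF J] near, OF \<open>k < T\<close> \<open>k < T\<close>] by simp
      then show "case_prod ell (z k) \<le> ls + ?\<omega> \<epsilon> + ?g k - ?h k"
        using orbit_cost_tight[OF J] by simp
    next
      fix k assume "k < n"
      have "dist (case_prod f (z k)) (fst (Orb (J (Suc k)))) \<le> dist (z (Suc k)) (Orb (J (Suc k)))"
        using dist_fst_le[of "z (Suc k)" "Orb (J (Suc k))"] by (simp add: z_def)
      moreover have "k < T" "dist (z k) (Orb (J k)) < \<epsilon>0" "dist (z (Suc k)) (Orb (J (Suc k))) < \<epsilon>0"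
        using near[of k] near[of "Suc k"] \<open>k < n\<close> Suc \<open>\<epsilon> < \<epsilon>0\<close> by simp_all
      ultimately have "fst (Orb (Suc (J k) mod p)) = fst (Orb (J (Suc k)))"
        by (intro snap[OF z_mem J J]) (auto intro: order_le_less_trans)
      then show "?g k = ?h (Suc k)" by simp
    qed
    also have "\<dots> \<le> (real T + real p - 1) * ls + real T * ?\<omega> \<epsilon>"
      using orbit_storage_diff_le[of "Suc (J n) mod p" "J 0"] J period_pos Suc
      by (simp add: algebra_simps)
    finally show ?thesis using Suc by (simp add: z_def)
  qed
  with \<open>0 < \<epsilon>0\<close> show ?thesis using that by blast
qed

theorem near_orbit_cost_bound:
  "\<exists>\<alpha>1. Kinf \<alpha>1 \<and>
    (\<forall>\<epsilon>>0. \<forall>T. \<forall>xh\<in>X. \<forall>uh. admissible f X U T xh uh \<longrightarrow>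
       (\<forall>k<T. orbit_dist p Orb (traj f uh xh k, uh k) \<le> \<epsilon>) \<longrightarrow>
       (\<Sum>k<T. ell (traj f uh xh k) (uh k)) \<le> (real T + real p - 1) * ls + real T * \<alpha>1 \<epsilon>)"
proof -
  obtain M where "0 \<le> M" and M: "\<And>z. z \<in> X \<times> U \<Longrightarrow> case_prod ell z \<le> M"
    using cost_bounded by blast
  obtain \<epsilon>0 where "0 < \<epsilon>0" and near_bound: "\<And>\<epsilon> T xh uh. \<epsilon> < \<epsilon>0 \<Longrightarrow> admissible f X U T xh uh \<Longrightarrow>
      (\<forall>k<T. orbit_dist p Orb (traj f uh xh k, uh k) \<le> \<epsilon>) \<Longrightarrow>
      (\<Sum>k<T. ell (traj f uh xh k) (uh k))
        \<le> (real T + real p - 1) * ls + real T * modulus_of_continuity (X \<times> U) (case_prod ell) \<epsilon>"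
    using near_orbit_cost_le by blast
  let ?\<omega> = "modulus_of_continuity (X \<times> U) (case_prod ell)"
  define b where "b \<epsilon> = (if \<epsilon> < \<epsilon>0 then ?\<omega> \<epsilon> else M)" for \<epsilon>
  have "0 \<le> b s \<and> b s \<le> M" if "0 < s" for s
  proof -
    have "0 \<le> ?\<omega> s"
      using cost_modulus[of "Orb 0" "Orb 0" s] orbit_mem period_pos \<open>0 < s\<close> by simp
    moreover have "?\<omega> s \<le> M"
    proof (rule modulus_of_continuity_least[OF domain_nonempty])
      fix z w assume "z \<in> X \<times> U" "w \<in> X \<times> U"
      then show "dist (case_prod ell z) (case_prod ell w) \<le> M"
        using M[of z] M[of w] cost_nonneg[of z] cost_nonneg[of w] by (simp add: dist_real_def)
    qed (use \<open>0 < s\<close> in simp)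
    ultimately show ?thesis using \<open>0 \<le> M\<close> by (simp add: b_def)
  qed
  moreover have "(b \<longlongrightarrow> 0) (at_right 0)"
  proof (rule tendsto_cong[THEN iffD1])
    show "\<forall>\<^sub>F \<epsilon> in at_right 0. ?\<omega> \<epsilon> = b \<epsilon>"
      using \<open>0 < \<epsilon>0\<close> by (auto simp: b_def eventually_at_right_field)
    show "(?\<omega> \<longlongrightarrow> 0) (at_right 0)"
      using cost_uniformly_continuous domain_nonempty by (rule tendsto_modulus_of_continuity)
  qed
  ultimately obtain \<alpha>1 where "Kinf \<alpha>1" and b_le: "\<And>s. 0 < s \<Longrightarrow> b s \<le> \<alpha>1 s"
    using Kinf_majorant by blast
  have "(\<Sum>k<T. ell (traj f uh xh k) (uh k)) \<le> (real T + real p - 1) * ls + real T * \<alpha>1 \<epsilon>"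
    if "0 < \<epsilon>" and adm: "admissible f X U T xh uh"
      and close: "\<forall>k<T. orbit_dist p Orb (traj f uh xh k, uh k) \<le> \<epsilon>" for \<epsilon> T xh uh
  proof (cases "\<epsilon> < \<epsilon>0")
    case True
    then have "?\<omega> \<epsilon> \<le> \<alpha>1 \<epsilon>" using b_le[OF \<open>0 < \<epsilon>\<close>] by (simp add: b_def)
    then show ?thesis using near_bound[OF True adm close] by (simp add: mult_left_mono order_trans)
  next
    case False
    then have "M \<le> \<alpha>1 \<epsilon>" using b_le[OF \<open>0 < \<epsilon>\<close>] by (simp add: b_def)
    have "(\<Sum>k<T. ell (traj f uh xh k) (uh k)) \<le> real T * M"
      using sum_bounded_above[of "{..<T}" "\<lambda>k. ell (traj f uh xh k) (uh k)" M] M adm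
      by (force simp: admissible_def)
    also have "\<dots> \<le> real T * \<alpha>1 \<epsilon>" using \<open>M \<le> \<alpha>1 \<epsilon>\<close> by (simp add: mult_left_mono)
    finally show ?thesis using period_pos average_nonneg by (simp add: add_increasing)
  qed
  with \<open>Kinf \<alpha>1\<close> show ?thesis by blast
qed

end

theorem lemma24:
  fixes f :: "'a::euclidean_space \<Rightarrow> 'b::euclidean_space \<Rightarrow> 'a"
    and X :: "'a set" and U :: "'b set"
    and ell :: "'a \<Rightarrow> 'b \<Rightarrow> real"
    and pstar :: nat and Pistar :: "nat \<Rightarrow> 'a \<times> 'b"
  assumes A1_f: "continuous_on (X \<times> U) (\<lambda>(x, u). f x u)"
    and A1_l: "continuous_on (X \<times> U) (\<lambda>(x, u). ell x u)"
    and A1_X: "compact X" and A1_U: "compact U"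
    and l_nonneg: "\<And>x u. x \<in> X \<Longrightarrow> u \<in> U \<Longrightarrow> ell x u \<ge> 0"
    and Pistar_feas: "feasible_orbit f X U pstar Pistar"
    and Pistar_opt: "orbit_avg ell pstar Pistar = ell_star f X U ell"
    and A3: "\<exists>(lam::'a \<Rightarrow> real) lambar \<alpha>. (\<forall>x\<in>X. \<bar>lam x\<bar> \<le> lambar) \<and> Kinf \<alpha> \<and>
      (\<forall>x\<in>X. \<forall>u\<in>U. f x u \<in> X \<longrightarrow>
         ell x u - ell_star f X U ell + lam x - lam (f x u) \<ge> \<alpha> (orbit_dist pstar Pistar (x, u)))"
  shows "\<exists>\<alpha>1. Kinf \<alpha>1 \<and>
    (\<forall>\<epsilon>>0. \<forall>T::nat. \<forall>xh\<in>X. \<forall>uh. admissible f X U T xh uh \<longrightarrow>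
       (\<forall>k<T. orbit_dist pstar Pistar (traj f uh xh k, uh k) \<le> \<epsilon>) \<longrightarrow>
       (\<Sum>k<T. ell (traj f uh xh k) (uh k))
         \<le> (real T + real pstar - 1) * ell_star f X U ell + real T * \<alpha>1 \<epsilon>)"
proof -
  obtain lam lambar \<alpha> where "Kinf \<alpha>" and A3': "\<forall>x\<in>X. \<forall>u\<in>U. f x u \<in> X \<longrightarrow>
      ell x u - ell_star f X U ell + lam x - lam (f x u) \<ge> \<alpha> (orbit_dist pstar Pistar (x, u))"
    using A3 by blast
  have "1 \<le> pstar" using Pistar_feas by (simp add: feasible_orbit_def)
  then have \<alpha>_nonneg: "0 \<le> \<alpha> (orbit_dist pstar Pistar z)" for z
    using orbit_dist_attained Kinf_nonneg[OF \<open>Kinf \<alpha>\<close>] by (metis norm_ge_zero)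
  have "lam (f x u) - lam x \<le> ell x u - ell_star f X U ell"
    if "x \<in> X" "u \<in> U" "f x u \<in> X" for x u
    using A3'[rule_format, OF that] \<alpha>_nonneg[of "(x, u)"] by linarith
  then interpret periodic_dissipative_system f X U ell pstar Pistar "ell_star f X U ell" lam
    using A1_f A1_l A1_X A1_U l_nonneg Pistar_feas Pistar_opt by unfold_locales auto
  show ?thesis by (rule near_orbit_cost_bound)
qed

end
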